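(* The canonical collection $\mathcal{S}$ satisfies $$\sum_{S\in\mathcal{S}}c(T_S)\ \le\ \mathrm{val}(\mathcal{S})+2\cdot\mathrm{excess}(\mathrm{OPT}).$$
   Context: Steiner Forest: finite undirected graph $G=(V,E)$ with non-negative edge costs $(c_e)_{e\in E}$ and a set $\mathcal{D}$ of demand pairs $\{a,b\}\subseteq V$ (partners); feasible solutions are $F\subseteq E$ with each demand pair in one connected component of $(V,F)$, of cost $c(F)=\sum_{e\in F}c_e$. $\mathrm{OPT}$ is a fixed optimal solution that is inclusionwise minimal (no cost-$0$ edge can be omitted keeping feasibility). For $U\subseteq V$, $\delta(U)$ is the set of edges with exactly one endpoint in $U$; $U$ separates $S$ if $S\cap U\ne\emptyset$ and $S\setminus U\ne\emptyset$. The $\varepsilon$-extended moat-growing algorithm (fixed $\varepsilon\ge0$): time $t$ increases continuously from $0$ at unit rate; it maintains tight edges $F$ (initially empty), duals $y_S(t)\ge0$ (initially $0$), and budgets of components (initially $0$). $\mathcal{C}^t$ is the family of vertex sets of connected components of $(V,F)$. A component is demand-active if it contains a vertex not connected in $(V,F)$ to some partner; budget-active if not demand-active but with positive budget; active if either; $\mathcal{A}^t$ is the set of active components. Each $y_S$, $S\in\mathcal{A}^t$, grows at unit rate; budgets of demand-active components grow at rate $\varepsilon$ and of budget-active ones decrease at rate $1$; an edge $e$ with $\sum_{S:e\in\delta(S)}y_S(t)=c_e$ becomes tight and is added to $F$; merging components add budgets. $y_S=y_S(\infty)$; $\mathcal{U}_{\mathrm{sep}}$ is the set of $U\in\mathrm{supp}(y)$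 separating some demand pair; $\mathrm{excess}(F)=c(F)-\sum_{U\in\mathcal{U}_{\mathrm{sep}}}y_U$. The deactivation time $\tau_v$ of $v$ is the largest $t$ such that for all $s<t$, $v$ lies in a set of $\mathcal{A}^s$. Vertices $u,v$ are actively connected if for some $t$ they lie in a common set of $\mathcal{C}^t$ and $\tau_u,\tau_v\ge t$ (an equivalence relation). For each $U\in\mathcal{U}_{\mathrm{sep}}$ fix a demand pair $\varphi(U)$ separated by $U$. For a demand pair $d$, $\mathrm{val}(d)=\sum_{U:\varphi(U)=d}y_U$. A demand pair $\{a,b\}$ is satisfied by a set $S$ if $\{a,b\}\subseteq S$, and by a collection if by some member; $\mathrm{val}(\mathcal{S})$ is the sum of $\mathrm{val}(d)$ over demand pairs $d$ satisfied by $\mathcal{S}$. Canonical collection: start with a family $\mathcal{F}$ in which each tree (connected component) of $\mathrm{OPT}$ is its own forest; for each $U\in\mathcal{U}_{\mathrm{sep}}$, merge all forests of $\mathcal{F}$ that connect some demand pair separated by $U$ into a single forest. For each $F\in\mathcal{F}$ let $r_F$ be a vertex of $F$ with maximum deactivation time; for each connected component $T$ of $F$, let $S$ be the set of vertices of $T$ actively connected to $r_F$; if $S\ne\emptyset$, add $S$ to $\mathcal{S}$ and let $T_S$ be the minimal subtree of $T$ connecting $S$. *)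

theory Defs
  imports Complex_Main
begin

text \<open>Vertices have type 'v, the vertex set is V; an edge is a 2-element subset of V.\<close>

definition erel :: "'v set set \<Rightarrow> ('v \<times> 'v) set" where
  "erel F = {(u, w). {u, w} \<in> F}"

definition conn :: "'v set set \<Rightarrow> 'v \<Rightarrow> 'v \<Rightarrow> bool" where
  "conn F u w \<longleftrightarrow> (u, w) \<in> (erel F)\<^sup>*"

definition comps :: "'v set \<Rightarrow> 'v set set \<Rightarrow> 'v set set" where
  "comps V F = (\<lambda>u. {w \<in> V. conn F u w}) ` V"

definition in_delta :: "'v set \<Rightarrow> 'v set \<Rightarrow> bool" where
  "in_delta U e \<longleftrightarrow> card (e \<inter> U) = 1"

definition separates :: "'v set \<Rightarrow> 'v set \<Rightarrow> bool" where
  "separates U S \<longleftrightarrow> S \<inter> U \<noteq> {} \<and> S - U \<noteq> {}"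

definition cost :: "('v set \<Rightarrow> real) \<Rightarrow> 'v set set \<Rightarrow> real" where
  "cost c F = (\<Sum>e\<in>F. c e)"

definition feasible :: "'v set \<Rightarrow> 'v set set \<Rightarrow> 'v set set \<Rightarrow> bool" where
  "feasible V D F \<longleftrightarrow> (\<forall>d\<in>D. \<exists>C\<in>comps V F. d \<subseteq> C)"

definition connects :: "'v set set \<Rightarrow> 'v set \<Rightarrow> bool" where
  "connects X S \<longleftrightarrow> (\<forall>u\<in>S. \<forall>w\<in>S. conn X u w)"

definition sf_instance :: "'v set \<Rightarrow> 'v set set \<Rightarrow> ('v set \<Rightarrow> real) \<Rightarrow> 'v set set \<Rightarrow> bool" where
  "sf_instance V E c D \<longleftrightarrow> finite V
     \<and> (\<forall>e\<in>E. e \<subseteq> V \<and> card e = 2 \<and> c e \<ge> 0)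
     \<and> (\<forall>d\<in>D. d \<subseteq> V \<and> card d = 2)"

definition min_opt :: "'v set \<Rightarrow> 'v set set \<Rightarrow> ('v set \<Rightarrow> real) \<Rightarrow> 'v set set \<Rightarrow> 'v set set \<Rightarrow> bool" where
  "min_opt V E c D OPT \<longleftrightarrow> OPT \<subseteq> E \<and> feasible V D OPT
     \<and> (\<forall>F. F \<subseteq> E \<and> feasible V D F \<longrightarrow> cost c OPT \<le> cost c F)
     \<and> (\<forall>e\<in>OPT. \<not> feasible V D (OPT - {e}))"

section \<open>The epsilon-extended moat-growing algorithm (event-driven description)\<close>

text \<open>A state: (tight edges F, duals y, budgets b, time t). Budgets are indexed by vertex sets
  (only the values at current components matter).\<close>
type_synonym 'v state = "'v set set \<times> ('v set \<Rightarrow> real) \<times> ('v set \<Rightarrow> real) \<times> real"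

definition sF :: "'v state \<Rightarrow> 'v set set" where "sF s = fst s"
definition sy :: "'v state \<Rightarrow> 'v set \<Rightarrow> real" where "sy s = fst (snd s)"
definition sb :: "'v state \<Rightarrow> 'v set \<Rightarrow> real" where "sb s = fst (snd (snd s))"
definition st :: "'v state \<Rightarrow> real" where "st s = snd (snd (snd s))"

definition dact :: "'v set set \<Rightarrow> 'v set \<Rightarrow> bool" where
  "dact D C \<longleftrightarrow> (\<exists>v\<in>C. \<exists>d\<in>D. v \<in> d \<and> \<not> d \<subseteq> C)"

definition bact :: "'v set set \<Rightarrow> ('v set \<Rightarrow> real) \<Rightarrow> 'v set \<Rightarrow> bool" where
  "bact D b C \<longleftrightarrow> \<not> dact D C \<and> b C > 0"

definition active :: "'v set \<Rightarrow> 'v set set \<Rightarrow> 'v set set \<Rightarrow> ('v set \<Rightarrow> real) \<Rightarrow> 'v set set" where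
  "active V D F b = {C \<in> comps V F. dact D C \<or> bact D b C}"

definition load :: "'v set \<Rightarrow> ('v set \<Rightarrow> real) \<Rightarrow> 'v set \<Rightarrow> real" where
  "load V y e = (\<Sum>S\<in>{S. S \<subseteq> V \<and> in_delta S e}. y S)"

definition crossing :: "'v set \<Rightarrow> 'v set set \<Rightarrow> 'v set \<Rightarrow> bool" where
  "crossing V F e \<longleftrightarrow> (\<exists>C\<in>comps V F. in_delta C e)"

text \<open>every tight edge has already been added (lies inside a component)\<close>
definition closed :: "'v set \<Rightarrow> 'v set set \<Rightarrow> ('v set \<Rightarrow> real) \<Rightarrow> 'v set set \<Rightarrow> ('v set \<Rightarrow> real) \<Rightarrow> bool" where
  "closed V E c F y \<longleftrightarrow> (\<forall>e\<in>E. load V y e = c e \<longrightarrow> \<not> crossing V F e)"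

definition merge_step :: "'v set \<Rightarrow> 'v set set \<Rightarrow> ('v set \<Rightarrow> real) \<Rightarrow> 'v state \<Rightarrow> 'v state \<Rightarrow> bool" where
  "merge_step V E c s s' \<longleftrightarrow> st s' = st s \<and> sy s' = sy s \<and>
     (\<exists>u w. {u, w} \<in> E \<and> load V (sy s) {u, w} = c {u, w} \<and> \<not> conn (sF s) u w
        \<and> sF s' = insert {u, w} (sF s)
        \<and> sb s' = (sb s)({x \<in> V. conn (sF s) u x} \<union> {x \<in> V. conn (sF s) w x} :=
                      sb s {x \<in> V. conn (sF s) u x} + sb s {x \<in> V. conn (sF s) w x}))"

text \<open>continuous growth phase of length Delta > 0 until the next event
  (an edge becoming tight or a budget reaching 0)\<close>
definition grow_step :: "'v set \<Rightarrow> 'v set set \<Rightarrow> ('v set \<Rightarrow> real) \<Rightarrow> 'v set set \<Rightarrow> real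
     \<Rightarrow> 'v state \<Rightarrow> 'v state \<Rightarrow> bool" where
  "grow_step V E c D \<epsilon> s s' \<longleftrightarrow>
     (let F = sF s; y = sy s; b = sb s; A = active V D F b in
      closed V E c F y \<and> A \<noteq> {} \<and> sF s' = F \<and>
      (\<exists>\<Delta>>0. st s' = st s + \<Delta>
        \<and> sy s' = (\<lambda>S. if S \<in> A then y S + \<Delta> else y S)
        \<and> sb s' = (\<lambda>C. if C \<in> comps V F \<and> dact D C then b C + \<epsilon> * \<Delta>
                       else if C \<in> comps V F \<and> bact D b C then b C - \<Delta> else b C)
        \<and> (\<forall>e\<in>E. load V (sy s') e \<le> c e)
        \<and> (\<forall>C\<in>comps V F. bact D b C \<longrightarrow> sb s' C \<ge> 0)
        \<and> ((\<exists>e\<in>E. crossing V F e \<and> load V (sy s') e = c e)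
           \<or> (\<exists>C\<in>comps V F. bact D b C \<and> sb s' C = 0))))"

definition moat_run :: "'v set \<Rightarrow> 'v set set \<Rightarrow> ('v set \<Rightarrow> real) \<Rightarrow> 'v set set \<Rightarrow> real
     \<Rightarrow> 'v state list \<Rightarrow> bool" where
  "moat_run V E c D \<epsilon> R \<longleftrightarrow> R \<noteq> [] \<and> R ! 0 = ({}, (\<lambda>_. 0), (\<lambda>_. 0), 0)
     \<and> (\<forall>i. Suc i < length R \<longrightarrow>
            merge_step V E c (R ! i) (R ! Suc i) \<or> grow_step V E c D \<epsilon> (R ! i) (R ! Suc i))
     \<and> closed V E c (sF (last R)) (sy (last R))
     \<and> active V D (sF (last R)) (sb (last R)) = {}"

text \<open>The state current at time s (the last state with time \<le> s; right-continuous).\<close>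
definition idx :: "'v state list \<Rightarrow> real \<Rightarrow> nat" where
  "idx R s = (GREATEST i. i < length R \<and> st (R ! i) \<le> s)"

definition comps_at :: "'v set \<Rightarrow> 'v state list \<Rightarrow> real \<Rightarrow> 'v set set" where
  "comps_at V R s = comps V (sF (R ! idx R s))"

definition act_at :: "'v set \<Rightarrow> 'v set set \<Rightarrow> 'v state list \<Rightarrow> real \<Rightarrow> 'v set set" where
  "act_at V D R s = active V D (sF (R ! idx R s)) (sb (R ! idx R s))"

definition tau :: "'v set \<Rightarrow> 'v set set \<Rightarrow> 'v state list \<Rightarrow> 'v \<Rightarrow> real" where
  "tau V D R v = Sup {t. 0 \<le> t \<and> (\<forall>s. 0 \<le> s \<and> s < t \<longrightarrow> (\<exists>C\<in>act_at V D R s. v \<in> C))}"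

definition act_conn :: "'v set \<Rightarrow> 'v set set \<Rightarrow> 'v state list \<Rightarrow> 'v \<Rightarrow> 'v \<Rightarrow> bool" where
  "act_conn V D R u v \<longleftrightarrow> (\<exists>t\<ge>0. (\<exists>C\<in>comps_at V R t. u \<in> C \<and> v \<in> C)
                               \<and> tau V D R u \<ge> t \<and> tau V D R v \<ge> t)"

text \<open>final duals y_S = y_S(infinity)\<close>
definition yfin :: "'v state list \<Rightarrow> 'v set \<Rightarrow> real" where
  "yfin R = sy (last R)"

definition Usep :: "'v set \<Rightarrow> 'v set set \<Rightarrow> ('v set \<Rightarrow> real) \<Rightarrow> 'v set set" where
  "Usep V D y = {U. U \<subseteq> V \<and> y U \<noteq> 0 \<and> (\<exists>d\<in>D. separates U d)}"

definition excess :: "'v set \<Rightarrow> 'v set set \<Rightarrow> ('v set \<Rightarrow> real) \<Rightarrow> ('v set \<Rightarrow> real)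
     \<Rightarrow> 'v set set \<Rightarrow> real" where
  "excess V D c y F = cost c F - (\<Sum>U\<in>Usep V D y. y U)"

definition val :: "'v set \<Rightarrow> 'v set set \<Rightarrow> ('v set \<Rightarrow> real) \<Rightarrow> ('v set \<Rightarrow> 'v set)
     \<Rightarrow> 'v set \<Rightarrow> real" where
  "val V D y \<phi> d = (\<Sum>U\<in>{U \<in> Usep V D y. \<phi> U = d}. y U)"

definition val_coll :: "'v set \<Rightarrow> 'v set set \<Rightarrow> ('v set \<Rightarrow> real) \<Rightarrow> ('v set \<Rightarrow> 'v set)
     \<Rightarrow> 'v set set \<Rightarrow> real" where
  "val_coll V D y \<phi> SS = (\<Sum>d\<in>{d \<in> D. \<exists>S\<in>SS. d \<subseteq> S}. val V D y \<phi> d)"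

text \<open>Forests of the canonical collection: classes of trees of OPT (vertex sets of components of
  (V,OPT)) under the equivalence generated by the merges for U in Usep.\<close>
definition merge_rel :: "'v set \<Rightarrow> 'v set set \<Rightarrow> ('v set \<Rightarrow> real) \<Rightarrow> 'v set set
     \<Rightarrow> ('v set \<times> 'v set) set" where
  "merge_rel V D y OPT = {(T1, T2). T1 \<in> comps V OPT \<and> T2 \<in> comps V OPT \<and>
      (\<exists>U\<in>Usep V D y. \<exists>d1\<in>D. \<exists>d2\<in>D. separates U d1 \<and> separates U d2 \<and> d1 \<subseteq> T1 \<and> d2 \<subseteq> T2)}"

definition forests :: "'v set \<Rightarrow> 'v set set \<Rightarrow> ('v set \<Rightarrow> real) \<Rightarrow> 'v set set \<Rightarrow> 'v set set set" where
  "forests V D y OPT = comps V OPT // ((merge_rel V D y OPT)\<^sup>*)"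

text \<open>Canonical collection, recorded as pairs (S, T) with T the tree (vertex set) containing S.\<close>
definition canon :: "'v set \<Rightarrow> 'v set set \<Rightarrow> 'v state list \<Rightarrow> 'v set set
     \<Rightarrow> ('v set set \<Rightarrow> 'v) \<Rightarrow> ('v set \<times> 'v set) set" where
  "canon V D R OPT r = {(S, T). \<exists>Fo\<in>forests V D (yfin R) OPT. T \<in> Fo \<and>
       S = {v \<in> T. act_conn V D R v (r Fo)} \<and> S \<noteq> {}}"

definition min_subtree :: "'v set set \<Rightarrow> 'v set \<Rightarrow> 'v set \<Rightarrow> 'v set set" where
  "min_subtree OPT T S = (THE X. X \<subseteq> {e \<in> OPT. e \<subseteq> T} \<and> connects X S
                               \<and> (\<forall>X'. X' \<subset> X \<longrightarrow> \<not> connects X' S))"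

end

theory Submission
  imports Defs
begin

text \<open>
  Let \<open>X\<close> be the union of the subtrees \<open>T\<^sub>S\<close>. Distinct members of the canonical collection lie
  in distinct trees of \<open>OPT\<close>, so the subtrees are disjoint and their total cost is \<open>c(X)\<close>.
  The final duals are feasible: every edge cost is its dual load plus a nonnegative slack, so
  \<open>c(X) \<le> \<Sum>\<^sub>U y\<^sub>U |X \<inter> \<delta>(U)| + slack(OPT)\<close> and
  \<open>c(OPT) = \<Sum>\<^sub>U y\<^sub>U |OPT \<inter> \<delta>(U)| + slack(OPT)\<close>. As \<open>X \<subseteq> OPT\<close> and \<open>OPT\<close> crosses every
  \<open>U \<in> U\<^sub>s\<^sub>e\<^sub>p\<close>, the term \<open>y\<^sub>U |X \<inter> \<delta>(U)|\<close> is paid by \<open>2 y\<^sub>U (|OPT \<inter> \<delta>(U)| - 1)\<close>, except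
  when \<open>OPT\<close> crosses \<open>U\<close> exactly once and that edge lies in some \<open>T\<^sub>S\<close>. Then minimality of
  \<open>T\<^sub>S\<close> puts vertices of \<open>S\<close> on both sides of \<open>U\<close>. They are actively connected, so they met
  only after \<open>U\<close> was a component, and the endpoint of \<open>\<phi>(U)\<close> in \<open>U\<close> stayed active with them.
  Hence both partners of \<open>\<phi>(U)\<close> are actively connected to the root of \<open>S\<close>; they lie in the
  tree of the unique crossing edge, so \<open>S\<close> satisfies \<open>\<phi>(U)\<close> and \<open>y\<^sub>U\<close> is paid by \<open>val(S)\<close>.
\<close>

section \<open>Connectivity in edge sets\<close>

lemma sym_erel: "sym (erel F)"
  by (auto simp: sym_def erel_def insert_commute)

lemma conn_refl [simp]: "conn F u u"
  by (simp add: conn_def)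

lemma conn_sym: "conn F u w \<Longrightarrow> conn F w u"
  using sym_rtrancl[OF sym_erel, of F] unfolding sym_def conn_def by blast

lemma conn_trans: "conn F u v \<Longrightarrow> conn F v w \<Longrightarrow> conn F u w"
  unfolding conn_def by simp

lemma conn_edge: "{u, w} \<in> F \<Longrightarrow> conn F u w"
  unfolding conn_def erel_def by (simp add: r_into_rtrancl)

lemma conn_mono: "F \<subseteq> F' \<Longrightarrow> conn F u w \<Longrightarrow> conn F' u w"
  unfolding conn_def erel_def
  by (erule rtrancl_mono[THEN subsetD, rotated]) auto

lemma conn_induct [consumes 1, case_names refl step]:
  assumes "conn F a b" "P a"
    and "\<And>y z. conn F a y \<Longrightarrow> {y, z} \<in> F \<Longrightarrow> P y \<Longrightarrow> P z"
  shows "P b"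
  using assms(1) unfolding conn_def
proof (induction rule: rtrancl_induct)
  case base
  then show ?case using assms(2) by simp
next
  case (step y z)
  then show ?case using assms(3)[of y z] by (simp add: conn_def erel_def)
qed

lemma comp_of_mem: "x \<in> V \<Longrightarrow> {w \<in> V. conn F x w} \<in> comps V F"
  by (auto simp: comps_def)

lemma comps_subset: "C \<in> comps V F \<Longrightarrow> C \<subseteq> V"
  by (auto simp: comps_def)

lemma comp_closed: "C \<in> comps V F \<Longrightarrow> u \<in> C \<Longrightarrow> w \<in> V \<Longrightarrow> conn F u w \<Longrightarrow> w \<in> C"
  by (auto simp: comps_def intro: conn_trans)

lemma comp_conn: "C \<in> comps V F \<Longrightarrow> u \<in> C \<Longrightarrow> w \<in> C \<Longrightarrow> conn F u w"
  by (auto simp: comps_def intro: conn_trans conn_sym)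

lemma comps_eq:
  assumes "C \<in> comps V F" "C' \<in> comps V F" "v \<in> C" "v \<in> C'"
  shows "C = C'"
  using comp_conn[OF assms(1,3)] comp_conn[OF assms(2,4)] comp_closed[OF assms(1,3)]
    comp_closed[OF assms(2,4)] comps_subset[OF assms(1)] comps_subset[OF assms(2)]
  by blast

lemma ex_comp_iff: "(\<exists>C\<in>comps V F. u \<in> C \<and> w \<in> C) \<longleftrightarrow> u \<in> V \<and> w \<in> V \<and> conn F u w"
  by (auto simp: comps_def intro: conn_trans conn_sym)

lemma conn_leaves:
  assumes "conn F a b" "a \<in> W" "b \<notin> W"
  shows "\<exists>x y. {x, y} \<in> F \<and> x \<in> W \<and> y \<notin> W \<and> conn F a x"
proof -
  have "b \<in> W \<or> (\<exists>x y. {x, y} \<in> F \<and> x \<in> W \<and> y \<notin> W \<and> conn F a x)"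
    using assms(1)
  proof (induction rule: conn_induct)
    case refl
    then show ?case using assms(2) by simp
  next
    case (step y z)
    then show ?case by blast
  qed
  then show ?thesis using assms(3) by blast
qed

lemma conn_side_eq:
  assumes "conn F u w" and closed: "\<And>x y. {x, y} \<in> F \<Longrightarrow> x \<in> W \<Longrightarrow> y \<in> W"
  shows "u \<in> W \<longleftrightarrow> w \<in> W"
  using assms(1)
proof (induction rule: conn_induct)
  case refl
  then show ?case by simp
next
  case (step y z)
  then show ?case using closed[of y z] closed[of z y] by (auto simp: insert_commute)
qed

lemma conn_Diff_edge_cases:
  fixes p q :: 'v
  assumes "conn X u w"
  defines "Y \<equiv> X - {{p, q}}"
  shows "conn Y u w \<or> (conn Y u p \<and> conn Y q w) \<or> (conn Y u q \<and> conn Y p w)"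
  using assms(1)
proof (induction rule: conn_induct)
  case refl
  then show ?case by simp
next
  case (step y z)
  show ?case
  proof (cases "{y, z} = {p, q}")
    case False
    then have "conn Y y z" using step(2) unfolding Y_def by (intro conn_edge) auto
    then show ?thesis using step(3) conn_trans[of Y _ y z] by blast
  next
    case True
    then have "(y = p \<and> z = q) \<or> (y = q \<and> z = p)" by (simp add: doubleton_eq_iff)
    then show ?thesis
    proof
      assume "y = p \<and> z = q"
      then show ?thesis using step(3) conn_trans[of Y u p q] conn_sym[of Y q p] by auto
    next
      assume "y = q \<and> z = p"
      then show ?thesis using step(3) conn_trans[of Y u q p] conn_sym[of Y p q] by auto
    qed
  qed
qed

lemma conn_Diff_single_crossing:
  assumes "conn X u w" "p \<in> W" "q \<notin> W"
    and closed: "\<And>x y. {x, y} \<in> X - {{p, q}} \<Longrightarrow> x \<in> W \<Longrightarrow> y \<in> W"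
    and "u \<in> W \<longleftrightarrow> w \<in> W"
  shows "conn (X - {{p, q}}) u w"
proof -
  have side: "a \<in> W \<longleftrightarrow> b \<in> W" if "conn (X - {{p, q}}) a b" for a b
    using conn_side_eq[OF that closed] .
  consider "conn (X - {{p, q}}) u w"
    | "conn (X - {{p, q}}) u p" "conn (X - {{p, q}}) q w"
    | "conn (X - {{p, q}}) u q" "conn (X - {{p, q}}) p w"
    using conn_Diff_edge_cases[OF assms(1), of p q] by blast
  then show ?thesis
  proof cases
    case 1
    then show ?thesis .
  next
    case 2
    then show ?thesis using side[of u p] side[of q w] assms(2,3,5) by simp
  next
    case 3
    then show ?thesis using side[of u q] side[of p w] assms(2,3,5) by simp
  qed
qed

lemma separatesE:
  assumes "card d = 2" "separates U d"
  obtains a b where "d = {a, b}" "a \<in> U" "b \<notin> U"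
proof -
  obtain a b where ab: "a \<in> d" "a \<in> U" "b \<in> d" "b \<notin> U"
    using assms(2) unfolding separates_def by blast
  have "finite d" by (rule card_ge_0_finite) (simp add: assms(1))
  moreover have "card {a, b} = 2" using ab by (cases "a = b") auto
  ultimately have "{a, b} = d" using assms(1) ab by (intro card_seteq) auto
  then show ?thesis using that ab by blast
qed

lemma in_delta_doubleton: "x \<in> U \<Longrightarrow> y \<notin> U \<Longrightarrow> in_delta U {x, y}"
proof -
  assume "x \<in> U" "y \<notin> U"
  then have "{x, y} \<inter> U = {x}" by auto
  then show ?thesis unfolding in_delta_def by simp
qed

lemma in_delta_separates:
  assumes "card e = 2" "in_delta U e"
  shows "separates U e"
proof -
  have "e \<inter> U \<noteq> {}" using assms(2) unfolding in_delta_def by auto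
  moreover have "e \<inter> U \<noteq> e" using assms unfolding in_delta_def by auto
  ultimately show ?thesis unfolding separates_def by blast
qed

section \<open>Minimal connectors in a minimal solution\<close>

definition minimal_connector :: "'v set set \<Rightarrow> 'v set set \<Rightarrow> 'v set \<Rightarrow> bool" where
  "minimal_connector A X S \<longleftrightarrow> X \<subseteq> A \<and> connects X S \<and> (\<forall>X'. X' \<subset> X \<longrightarrow> \<not> connects X' S)"

lemma min_subtree_eq_The: "min_subtree B T S = (THE X. minimal_connector {e \<in> B. e \<subseteq> T} X S)"
  unfolding min_subtree_def minimal_connector_def ..

lemma min_opt_bridge:
  assumes mo: "min_opt V E c D OPT" and e: "{p, q} \<in> OPT"
  shows "\<not> conn (OPT - {{p, q}}) p q"
proof
  assume pq: "conn (OPT - {{p, q}}) p q"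
  have all: "conn (OPT - {{p, q}}) u w" if "conn OPT u w" for u w
    using conn_Diff_edge_cases[OF that, of p q] pq by (meson conn_sym conn_trans)
  have "feasible V D (OPT - {{p, q}})"
    unfolding feasible_def
  proof
    fix d assume "d \<in> D"
    then obtain x where x: "x \<in> V" "d \<subseteq> {w \<in> V. conn OPT x w}"
      using mo by (auto simp: min_opt_def feasible_def comps_def)
    then have "d \<subseteq> {w \<in> V. conn (OPT - {{p, q}}) x w}" using all by blast
    then show "\<exists>C\<in>comps V (OPT - {{p, q}}). d \<subseteq> C" using comp_of_mem[OF x(1)] by blast
  qed
  then show False using mo e by (auto simp: min_opt_def)
qed

lemma min_opt_edge:
  assumes "sf_instance V E c D" "min_opt V E c D OPT" "e \<in> OPT"
  shows "e \<subseteq> V" "card e = 2"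
  using assms by (auto simp: sf_instance_def min_opt_def)

lemma min_opt_finite:
  assumes "sf_instance V E c D" "min_opt V E c D OPT"
  shows "finite OPT"
proof (rule finite_subset)
  show "OPT \<subseteq> Pow V" using min_opt_edge[OF assms] by blast
  show "finite (Pow V)" using assms(1) by (simp add: sf_instance_def)
qed

lemma connects_comp:
  assumes T: "T \<in> comps V B" and "S \<subseteq> T" and edges: "\<And>e. e \<in> B \<Longrightarrow> e \<subseteq> V"
  shows "connects {e \<in> B. e \<subseteq> T} S"
  unfolding connects_def
proof (intro ballI)
  fix u w assume "u \<in> S" "w \<in> S"
  then have uT: "u \<in> T" and "conn B u w" using assms(2) comp_conn[OF T] by auto
  from \<open>conn B u w\<close> have "conn {e \<in> B. e \<subseteq> T} u w \<and> w \<in> T"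
  proof (induction rule: conn_induct)
    case refl
    then show ?case using uT by simp
  next
    case (step y z)
    have yT: "y \<in> T" using step(3) ..
    have zT: "z \<in> T"
      using comp_closed[OF T yT _ conn_edge[OF step(2)]] edges[OF step(2)] by simp
    have "{y, z} \<in> {e \<in> B. e \<subseteq> T}" using step(2) yT zT by simp
    then show ?case using conn_trans[OF conjunct1[OF step(3)] conn_edge] zT by blast
  qed
  then show "conn {e \<in> B. e \<subseteq> T} u w" ..
qed

lemma minimal_connector_exists:
  assumes "finite A" "connects A S"
  shows "\<exists>X. minimal_connector A X S"
proof -
  let ?P = "\<lambda>X. X \<subseteq> A \<and> connects X S"
  obtain X where X: "?P X" "\<And>Y. ?P Y \<Longrightarrow> card X \<le> card Y"
    using ex_has_least_nat[of ?P A card] assms by blast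
  have "\<not> connects X' S" if "X' \<subset> X" for X'
  proof
    assume "connects X' S"
    then have "card X \<le> card X'" using X that by blast
    moreover have "card X' < card X"
      using psubset_card_mono[OF finite_subset[OF _ assms(1)] that] X(1) by blast
    ultimately show False by simp
  qed
  then show ?thesis using X(1) unfolding minimal_connector_def by blast
qed

text \<open>The two witnesses lie on different sides of the component of \<open>p\<close> in \<open>B - {{p, q}}\<close>,
  which no edge of \<open>X\<close> other than \<open>{p, q}\<close> leaves.\<close>
lemma minimal_connector_edge_separates:
  assumes bridge: "\<not> conn (B - {{p, q}}) p q"
    and "X \<subseteq> B" and m: "minimal_connector A X S" and e: "{p, q} \<in> X"
  shows "\<exists>s\<in>S. \<exists>s'\<in>S. \<not> conn (B - {{p, q}}) s s'"
proof (rule ccontr)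
  assume "\<not> ?thesis"
  then have allc: "conn (B - {{p, q}}) s s'" if "s \<in> S" "s' \<in> S" for s s'
    using that by blast
  have cX: "conn X s s'" if "s \<in> S" "s' \<in> S" for s s'
    using m that unfolding minimal_connector_def connects_def by blast
  define W where "W = {x. conn (B - {{p, q}}) p x}"
  have closed: "y \<in> W" if "{x, y} \<in> B - {{p, q}}" "x \<in> W" for x y
    using that conn_trans[OF _ conn_edge[OF that(1)]] unfolding W_def by blast
  have closedX: "y \<in> W" if "{x, y} \<in> X - {{p, q}}" "x \<in> W" for x y
    using closed[OF _ that(2)] that(1) \<open>X \<subseteq> B\<close> by blast
  have "p \<in> W" "q \<notin> W" using bridge unfolding W_def by auto
  have "connects (X - {{p, q}}) S"
    unfolding connects_def
  proof (intro ballI)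
    fix s s' assume s: "s \<in> S" "s' \<in> S"
    have side: "s \<in> W \<longleftrightarrow> s' \<in> W" by (rule conn_side_eq[OF allc[OF s]]) (fact closed)
    show "conn (X - {{p, q}}) s s'"
      by (rule conn_Diff_single_crossing[OF cX[OF s] \<open>p \<in> W\<close> \<open>q \<notin> W\<close>]) (fact closedX, fact side)
  qed
  then show False using m e unfolding minimal_connector_def by blast
qed

text \<open>This makes minimal connectors inside a forest unique, so \<open>min_subtree\<close> is well defined.\<close>
lemma minimal_connector_eq:
  assumes bridge: "\<And>p q. {p, q} \<in> B \<Longrightarrow> \<not> conn (B - {{p, q}}) p q"
    and two: "\<And>e. e \<in> B \<Longrightarrow> card e = 2"
    and "A \<subseteq> B" and m: "minimal_connector A X S"
  shows "X = {e \<in> A. \<exists>s\<in>S. \<exists>s'\<in>S. \<not> conn (B - {e}) s s'}"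
proof (intro equalityI subsetI)
  have XA: "X \<subseteq> A" and cX: "\<And>s s'. s \<in> S \<Longrightarrow> s' \<in> S \<Longrightarrow> conn X s s'"
    using m unfolding minimal_connector_def connects_def by auto
  have XB: "X \<subseteq> B" using XA \<open>A \<subseteq> B\<close> by (rule subset_trans)
  fix e
  show "e \<in> {e \<in> A. \<exists>s\<in>S. \<exists>s'\<in>S. \<not> conn (B - {e}) s s'}" if "e \<in> X"
  proof -
    have "card e = 2" using two that XB by blast
    then obtain p q where e: "e = {p, q}" by (meson card_2_iff)
    then have "{p, q} \<in> X" using that by simp
    from minimal_connector_edge_separates[OF bridge[OF subsetD[OF XB this]] XB m this]
    show ?thesis using that XA e by blast
  qed
  show "e \<in> X" if sep: "e \<in> {e \<in> A. \<exists>s\<in>S. \<exists>s'\<in>S. \<not> conn (B - {e}) s s'}"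
  proof (rule ccontr)
    obtain s s' where s: "s \<in> S" "s' \<in> S" "\<not> conn (B - {e}) s s'" using sep by blast
    assume "e \<notin> X"
    then have "X \<subseteq> B - {e}" using XA \<open>A \<subseteq> B\<close> by blast
    then show False using conn_mono[OF _ cX[OF s(1,2)]] s(3) by blast
  qed
qed

lemma min_subtree_minimal:
  assumes inst: "sf_instance V E c D" and opt: "min_opt V E c D OPT"
    and T: "T \<in> comps V OPT" and "S \<subseteq> T"
  shows "minimal_connector {e \<in> OPT. e \<subseteq> T} (min_subtree OPT T S) S"
proof -
  have A: "finite {e \<in> OPT. e \<subseteq> T}" "connects {e \<in> OPT. e \<subseteq> T} S"
    using min_opt_finite[OF inst opt] connects_comp[OF T \<open>S \<subseteq> T\<close>] min_opt_edge[OF inst opt]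
    by auto
  have unique: "Y = X" if "minimal_connector {e \<in> OPT. e \<subseteq> T} X S"
    "minimal_connector {e \<in> OPT. e \<subseteq> T} Y S" for X Y
    using minimal_connector_eq[OF min_opt_bridge[OF opt] min_opt_edge(2)[OF inst opt] _ that(1)]
      minimal_connector_eq[OF min_opt_bridge[OF opt] min_opt_edge(2)[OF inst opt] _ that(2)]
    by auto
  obtain X where "minimal_connector {e \<in> OPT. e \<subseteq> T} X S"
    using minimal_connector_exists[OF A] ..
  moreover have "min_subtree OPT T S = X"
    unfolding min_subtree_eq_The using calculation by (rule the_equality) (rule unique[OF calculation])
  ultimately show ?thesis by simp
qed

lemma minimal_connector_splits:
  assumes m: "minimal_connector A X S" and "{p, q} \<in> X" "p \<in> U" "q \<notin> U"
    and closed: "\<And>x y. {x, y} \<in> X - {{p, q}} \<Longrightarrow> x \<in> U \<Longrightarrow> y \<in> U"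
  shows "\<exists>s\<in>S. \<exists>s'\<in>S. s \<in> U \<and> s' \<notin> U"
proof -
  have "X - {{p, q}} \<subset> X" using assms(2) by blast
  then obtain s s' where s: "s \<in> S" "s' \<in> S" "\<not> conn (X - {{p, q}}) s s'"
    using m unfolding minimal_connector_def connects_def by blast
  have "conn X s s'" using m s unfolding minimal_connector_def connects_def by blast
  have "\<not> (s \<in> U \<longleftrightarrow> s' \<in> U)"
  proof
    assume side: "s \<in> U \<longleftrightarrow> s' \<in> U"
    have "conn (X - {{p, q}}) s s'"
      by (rule conn_Diff_single_crossing[OF \<open>conn X s s'\<close> assms(3,4)]) (fact closed, fact side)
    then show False using s(3) by contradiction
  qed
  then show ?thesis using s by blast
qed

section \<open>Runs of the moat-growing algorithm\<close>

lemma grow_step_unfold: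
  assumes "grow_step V E c D \<epsilon> s s'"
  shows "sF s' = sF s \<and> (\<exists>\<Delta>>0. st s' = st s + \<Delta>
     \<and> sy s' = (\<lambda>S. if S \<in> active V D (sF s) (sb s) then sy s S + \<Delta> else sy s S)
     \<and> (\<forall>e\<in>E. load V (sy s') e \<le> c e))"
  using assms unfolding grow_step_def Let_def by blast

lemma merge_step_unfold:
  assumes "merge_step V E c s s'"
  shows "st s' = st s \<and> sy s' = sy s \<and> sF s \<subseteq> sF s'"
  using assms unfolding merge_step_def by auto

lemma unsatisfied_comp_active:
  assumes "a \<in> V" "{a, b} \<in> D" "\<not> conn F a b"
  shows "{w \<in> V. conn F a w} \<in> active V D F bud"
proof -
  have "a \<in> {w \<in> V. conn F a w}" "\<not> {a, b} \<subseteq> {w \<in> V. conn F a w}" using assms by auto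
  then have "dact D {w \<in> V. conn F a w}" unfolding dact_def using assms(2) by blast
  then show ?thesis unfolding active_def using comp_of_mem[OF assms(1)] by blast
qed

locale moat_run_setting =
  fixes V :: "'v set" and E :: "'v set set" and c :: "'v set \<Rightarrow> real" and D :: "'v set set"
    and \<epsilon> :: real and R :: "'v state list"
  assumes inst: "sf_instance V E c D" and run: "moat_run V E c D \<epsilon> R"
begin

lemma run_nonempty: "R \<noteq> []"
  using run by (simp add: moat_run_def)

lemma run_first: "R ! 0 = ({}, (\<lambda>_. 0), (\<lambda>_. 0), 0)"
  using run by (simp add: moat_run_def)

lemma run_step:
  "Suc i < length R \<Longrightarrow> merge_step V E c (R ! i) (R ! Suc i) \<or> grow_step V E c D \<epsilon> (R ! i) (R ! Suc i)"
  using run by (simp add: moat_run_def)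

lemma demand_subset: "d \<in> D \<Longrightarrow> d \<subseteq> V"
  using inst by (simp add: sf_instance_def)

lemma step_mono:
  assumes "Suc i < length R"
  shows "st (R ! i) \<le> st (R ! Suc i) \<and> sF (R ! i) \<subseteq> sF (R ! Suc i)"
  using run_step[OF assms]
proof
  assume "grow_step V E c D \<epsilon> (R ! i) (R ! Suc i)"
  then obtain \<Delta> where "\<Delta> > 0" "st (R ! Suc i) = st (R ! i) + \<Delta>" "sF (R ! Suc i) = sF (R ! i)"
    using grow_step_unfold by blast
  then show ?thesis by simp
next
  assume "merge_step V E c (R ! i) (R ! Suc i)"
  from merge_step_unfold[OF this] show ?thesis by simp
qed

lemma time_mono: "i \<le> j \<Longrightarrow> j < length R \<Longrightarrow> st (R ! i) \<le> st (R ! j)"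
proof (induction j rule: dec_induct)
  case (step n)
  then show ?case using step_mono[of n] by simp
qed simp

lemma tight_mono: "i \<le> j \<Longrightarrow> j < length R \<Longrightarrow> sF (R ! i) \<subseteq> sF (R ! j)"
proof (induction j rule: dec_induct)
  case (step n)
  then show ?case using step_mono[of n] by auto
qed simp

lemma time_nonneg: "j < length R \<Longrightarrow> 0 \<le> st (R ! j)"
  using time_mono[of 0 j] run_first by (simp add: st_def)

definition t_end :: real where
  "t_end = st (last R)"

lemma last_run: "last R = R ! (length R - 1)"
  using last_conv_nth[OF run_nonempty] .

lemma t_end_nonneg: "0 \<le> t_end"
  unfolding t_end_def last_run using time_nonneg run_nonempty by simp

lemma idx_bounds:
  assumes "0 \<le> s"
  shows "idx R s < length R" "st (R ! idx R s) \<le> s"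
    and "\<And>j. j < length R \<Longrightarrow> st (R ! j) \<le> s \<Longrightarrow> j \<le> idx R s"
proof -
  let ?P = "\<lambda>i. i < length R \<and> st (R ! i) \<le> s"
  have "?P 0" using run_nonempty run_first assms by (simp add: st_def)
  then have "?P (Greatest ?P)" by (rule GreatestI_nat[of ?P 0 "length R"]) simp
  then show "idx R s < length R" "st (R ! idx R s) \<le> s" unfolding idx_def by auto
  fix j assume "j < length R" "st (R ! j) \<le> s"
  then show "j \<le> idx R s" unfolding idx_def by (intro Greatest_le_nat[of ?P j "length R"]) auto
qed

lemma idx_mono: "0 \<le> s \<Longrightarrow> s \<le> s' \<Longrightarrow> idx R s \<le> idx R s'"
  using idx_bounds[of s] idx_bounds[of s'] by force

lemma idx_t_end: "idx R t_end = length R - 1"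
proof -
  have "length R - 1 \<le> idx R t_end"
    using idx_bounds(3)[OF t_end_nonneg] run_nonempty unfolding t_end_def last_run by simp
  then show ?thesis using idx_bounds(1)[OF t_end_nonneg] by simp
qed

lemma act_at_t_end: "act_at V D R t_end = {}"
  using run idx_t_end last_run unfolding act_at_def moat_run_def by simp

definition tight_at :: "real \<Rightarrow> 'v set set" where
  "tight_at s = sF (R ! idx R s)"

lemma tight_at_mono: "0 \<le> s \<Longrightarrow> s \<le> s' \<Longrightarrow> tight_at s \<subseteq> tight_at s'"
  unfolding tight_at_def using tight_mono[OF idx_mono idx_bounds(1)] by simp

lemma conn_tight_at_mono: "0 \<le> s \<Longrightarrow> s \<le> s' \<Longrightarrow> conn (tight_at s) u v \<Longrightarrow> conn (tight_at s') u v"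
  using conn_mono[OF tight_at_mono] .

lemma act_at_comp: "C \<in> act_at V D R s \<Longrightarrow> C \<in> comps V (tight_at s)"
  unfolding act_at_def active_def tight_at_def by simp

definition active_until :: "'v \<Rightarrow> real \<Rightarrow> bool" where
  "active_until v t \<longleftrightarrow> (\<forall>s. 0 \<le> s \<and> s < t \<longrightarrow> (\<exists>C\<in>act_at V D R s. v \<in> C))"

lemma active_until_le_t_end: "active_until v t \<Longrightarrow> t \<le> t_end"
  using act_at_t_end t_end_nonneg unfolding active_until_def by (cases "t \<le> t_end") auto

lemma le_tau_iff: "0 \<le> t \<Longrightarrow> t \<le> tau V D R v \<longleftrightarrow> active_until v t"
proof -
  let ?G = "{t. 0 \<le> t \<and> active_until v t}"
  have tau: "tau V D R v = Sup ?G" unfolding tau_def active_until_def ..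
  have ne: "?G \<noteq> {}" by (auto simp: active_until_def intro!: exI[of _ 0])
  have bdd: "bdd_above ?G" using active_until_le_t_end by (auto intro!: bdd_aboveI[of _ t_end])
  assume "0 \<le> t"
  show ?thesis
  proof
    assume "t \<le> tau V D R v"
    show "active_until v t"
      unfolding active_until_def
    proof (intro allI impI)
      fix s assume s: "0 \<le> s \<and> s < t"
      then have "s < Sup ?G" using \<open>t \<le> tau V D R v\<close> tau by simp
      then obtain t' where "t' \<in> ?G" "s < t'" using less_cSup_iff[OF ne bdd] by blast
      then show "\<exists>C\<in>act_at V D R s. v \<in> C" using s unfolding active_until_def by blast
    qed
  next
    assume "active_until v t"
    then show "t \<le> tau V D R v" unfolding tau using cSup_upper[OF _ bdd] \<open>0 \<le> t\<close> by simp
  qed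
qed

lemma act_conn_iff:
  "act_conn V D R u v \<longleftrightarrow>
     (\<exists>t\<ge>0. u \<in> V \<and> v \<in> V \<and> conn (tight_at t) u v \<and> active_until u t \<and> active_until v t)"
proof -
  have "(\<exists>C\<in>comps_at V R t. u \<in> C \<and> v \<in> C) \<longleftrightarrow> u \<in> V \<and> v \<in> V \<and> conn (tight_at t) u v"
    for t unfolding comps_at_def tight_at_def by (rule ex_comp_iff)
  then show ?thesis unfolding act_conn_def by (simp add: le_tau_iff cong: conj_cong)
qed

text \<open>Once \<open>u\<close> and \<open>v\<close> are connected, \<open>u\<close> lies in the component of \<open>v\<close>, which stays
  active as long as \<open>v\<close> does.\<close>
lemma active_until_extend:
  assumes "u \<in> V" "conn (tight_at t1) u v" "0 \<le> t1" "t1 \<le> t2"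
    and "active_until u t1" "active_until v t2"
  shows "active_until u t2"
  unfolding active_until_def
proof (intro allI impI)
  fix s assume s: "0 \<le> s \<and> s < t2"
  show "\<exists>C\<in>act_at V D R s. u \<in> C"
  proof (cases "s < t1")
    case True
    then show ?thesis using assms(5) s unfolding active_until_def by blast
  next
    case False
    obtain C where C: "C \<in> act_at V D R s" "v \<in> C"
      using assms(6) s unfolding active_until_def by blast
    have "t1 \<le> s" using False by simp
    then have "conn (tight_at s) v u" using conn_sym[OF conn_tight_at_mono[OF assms(3) _ assms(2)]] by simp
    then show ?thesis using comp_closed[OF act_at_comp[OF C(1)] C(2) assms(1)] C(1) by blast
  qed
qed

lemma act_connI:
  "0 \<le> t \<Longrightarrow> u \<in> V \<Longrightarrow> v \<in> V \<Longrightarrow> conn (tight_at t) u v \<Longrightarrow> active_until u t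
    \<Longrightarrow> active_until v t \<Longrightarrow> act_conn V D R u v"
  unfolding act_conn_iff by blast

lemma act_connE:
  assumes "act_conn V D R u v"
  obtains t where "0 \<le> t" "u \<in> V" "v \<in> V" "conn (tight_at t) u v"
    "active_until u t" "active_until v t"
  using assms unfolding act_conn_iff by blast

lemma act_conn_sym:
  assumes "act_conn V D R u v"
  shows "act_conn V D R v u"
proof -
  obtain t where t: "0 \<le> t" "u \<in> V" "v \<in> V" "conn (tight_at t) u v"
    "active_until u t" "active_until v t"
    using assms by (rule act_connE)
  show ?thesis using act_connI[OF t(1,3,2) conn_sym[OF t(4)] t(6,5)] .
qed

lemma act_conn_trans:
  assumes "act_conn V D R u v" "act_conn V D R v w"
  shows "act_conn V D R u w"
proof -
  obtain t1 where 1: "t1 \<ge> 0" "u \<in> V" "v \<in> V" "conn (tight_at t1) u v"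
    "active_until u t1" "active_until v t1"
    using assms(1) by (rule act_connE)
  obtain t2 where 2: "t2 \<ge> 0" "v \<in> V" "w \<in> V" "conn (tight_at t2) v w"
    "active_until v t2" "active_until w t2"
    using assms(2) by (rule act_connE)
  show ?thesis
  proof (cases "t1 \<le> t2")
    case True
    have "active_until u t2" using active_until_extend[OF 1(2,4,1) True 1(5) 2(5)] .
    moreover have "conn (tight_at t2) u w"
      using conn_trans[OF conn_tight_at_mono[OF 1(1) True 1(4)] 2(4)] .
    ultimately show ?thesis using act_connI[OF 2(1) 1(2) 2(3)] 2(6) by blast
  next
    case False
    then have "t2 \<le> t1" by simp
    have "active_until w t1"
      using active_until_extend[OF 2(3) conn_sym[OF 2(4)] 2(1) \<open>t2 \<le> t1\<close> 2(6) 1(6)] .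
    moreover have "conn (tight_at t1) u w"
      using conn_trans[OF 1(4) conn_tight_at_mono[OF 2(1) \<open>t2 \<le> t1\<close> 2(4)]] .
    ultimately show ?thesis using act_connI[OF 1(1,2) 2(3)] 1(5) by blast
  qed
qed

lemma active_until_while_apart:
  assumes "a \<in> V" "{a, b} \<in> D" and apart: "\<And>s. 0 \<le> s \<Longrightarrow> s < t \<Longrightarrow> \<not> conn (tight_at s) a b"
  shows "active_until a t"
  unfolding active_until_def
proof (intro allI impI)
  fix s assume "0 \<le> s \<and> s < t"
  then have "\<not> conn (tight_at s) a b" using apart by blast
  from unsatisfied_comp_active[OF assms(1,2) this]
  have "{w \<in> V. conn (tight_at s) a w} \<in> act_at V D R s" unfolding act_at_def tight_at_def .
  then show "\<exists>C\<in>act_at V D R s. a \<in> C" by (rule bexI[rotated]) (simp add: assms(1))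
qed

lemma demand_conn_finally:
  assumes "{a, b} \<in> D"
  shows "conn (sF (last R)) a b"
proof (rule ccontr)
  assume "\<not> ?thesis"
  then have "{w \<in> V. conn (sF (last R)) a w} \<in> active V D (sF (last R)) (sb (last R))"
    using unsatisfied_comp_active[OF _ assms] demand_subset[OF assms] by simp
  then show False using run unfolding moat_run_def by simp
qed

lemma demand_act_conn:
  assumes d: "{a, b} \<in> D"
  shows "act_conn V D R a b"
proof -
  have a: "a \<in> V" and b: "b \<in> V" using demand_subset[OF d] by auto
  have d': "{b, a} \<in> D" using d by (simp add: insert_commute)
  let ?P = "\<lambda>j. j < length R \<and> conn (sF (R ! j)) a b"
  have "?P (length R - 1)" using demand_conn_finally[OF d] run_nonempty last_run by simp
  then have Pj: "?P (Least ?P)" by (rule LeastI)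
  define t where "t = st (R ! Least ?P)"
  have t0: "0 \<le> t" using time_nonneg Pj t_def by simp
  have apart: "\<not> conn (tight_at s) a b" if s: "0 \<le> s" "s < t" for s
  proof
    assume "conn (tight_at s) a b"
    then have "?P (idx R s)" using idx_bounds(1)[OF s(1)] unfolding tight_at_def by simp
    then have "Least ?P \<le> idx R s" by (rule Least_le)
    then have "t \<le> st (R ! idx R s)" unfolding t_def using time_mono idx_bounds(1)[OF s(1)] by simp
    then show False using idx_bounds(2)[OF s(1)] s(2) by simp
  qed
  have "active_until a t" using active_until_while_apart[OF a d apart] .
  moreover have "active_until b t"
  proof (rule active_until_while_apart[OF b d'])
    fix s assume "0 \<le> s" "s < t"
    then show "\<not> conn (tight_at s) b a" using apart conn_sym[of "tight_at s" b a] by blast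
  qed
  moreover have "Least ?P \<le> idx R t" by (rule idx_bounds(3)[OF t0]) (use Pj t_def in simp_all)
  then have "sF (R ! Least ?P) \<subseteq> tight_at t"
    unfolding tight_at_def using tight_mono idx_bounds(1)[OF t0] by simp
  then have "conn (tight_at t) a b" using conn_mono Pj by auto
  ultimately show ?thesis by (rule act_connI[OF t0 a b, rotated])
qed

lemma duals_first: "sy (R ! 0) = (\<lambda>_. 0)"
  using run_first by (simp add: sy_def)

lemma dual_positive_active:
  assumes "j < length R" "sy (R ! j) U \<noteq> 0"
  shows "\<exists>i. Suc i \<le> j \<and> grow_step V E c D \<epsilon> (R ! i) (R ! Suc i)
           \<and> U \<in> active V D (sF (R ! i)) (sb (R ! i))"
  using assms
proof (induction j)
  case 0
  then show ?case using duals_first by simp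
next
  case (Suc j)
  show ?case using run_step[OF Suc.prems(1)]
  proof
    assume "merge_step V E c (R ! j) (R ! Suc j)"
    from merge_step_unfold[OF this] have "sy (R ! j) U \<noteq> 0" using Suc.prems(2) by simp
    then show ?thesis using Suc.IH Suc.prems(1) le_SucI by fastforce
  next
    assume g: "grow_step V E c D \<epsilon> (R ! j) (R ! Suc j)"
    show ?thesis
    proof (cases "U \<in> active V D (sF (R ! j)) (sb (R ! j))")
      case True
      then show ?thesis using g by blast
    next
      case False
      then have "sy (R ! j) U \<noteq> 0" using grow_step_unfold[OF g] Suc.prems(2) by auto
      then show ?thesis using Suc.IH Suc.prems(1) le_SucI by fastforce
    qed
  qed
qed

lemma duals_nonneg: "j < length R \<Longrightarrow> 0 \<le> sy (R ! j) U"
proof (induction j)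
  case 0
  then show ?case using duals_first by simp
next
  case (Suc j)
  show ?case using run_step[OF Suc.prems]
  proof
    assume "merge_step V E c (R ! j) (R ! Suc j)"
    from merge_step_unfold[OF this] show ?thesis using Suc by simp
  next
    assume "grow_step V E c D \<epsilon> (R ! j) (R ! Suc j)"
    then show ?thesis using grow_step_unfold Suc by fastforce
  qed
qed

lemma load_le_cost: "j < length R \<Longrightarrow> e \<in> E \<Longrightarrow> load V (sy (R ! j)) e \<le> c e"
proof (induction j)
  case 0
  then show ?case using duals_first inst by (simp add: load_def sf_instance_def)
next
  case (Suc j)
  show ?case using run_step[OF Suc.prems(1)]
  proof
    assume "merge_step V E c (R ! j) (R ! Suc j)"
    from merge_step_unfold[OF this] show ?thesis using Suc by simp
  next
    assume "grow_step V E c D \<epsilon> (R ! j) (R ! Suc j)"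
    then show ?thesis using grow_step_unfold Suc.prems(2) by blast
  qed
qed

lemma yfin_eq: "yfin R = sy (R ! (length R - 1))"
  using last_run by (simp add: yfin_def)

lemma yfin_nonneg: "0 \<le> yfin R U"
  using yfin_eq duals_nonneg run_nonempty by simp

lemma yfin_load_le_cost: "e \<in> E \<Longrightarrow> load V (yfin R) e \<le> c e"
  using yfin_eq load_le_cost run_nonempty by simp

lemma idx_grow_start:
  assumes i: "Suc i < length R" and g: "grow_step V E c D \<epsilon> (R ! i) (R ! Suc i)"
  shows "idx R (st (R ! i)) = i"
proof -
  have t0: "0 \<le> st (R ! i)" using time_nonneg i by simp
  have "i \<le> idx R (st (R ! i))" using idx_bounds(3)[OF t0, of i] i by simp
  moreover have "\<not> Suc i \<le> idx R (st (R ! i))"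
  proof
    assume "Suc i \<le> idx R (st (R ! i))"
    then have "st (R ! Suc i) \<le> st (R ! i)"
      using time_mono idx_bounds(1,2)[OF t0] order_trans by blast
    then show False using grow_step_unfold[OF g] by auto
  qed
  ultimately show ?thesis by simp
qed

lemma positive_dual_comp:
  assumes "yfin R U \<noteq> 0"
  obtains t where "0 \<le> t" "U \<in> comps V (tight_at t)"
proof -
  have "sy (R ! (length R - 1)) U \<noteq> 0" using assms yfin_eq by simp
  then obtain i where "Suc i \<le> length R - 1" "grow_step V E c D \<epsilon> (R ! i) (R ! Suc i)"
    and "U \<in> active V D (sF (R ! i)) (sb (R ! i))"
    using dual_positive_active[of "length R - 1" U] run_nonempty by auto
  then have i: "Suc i < length R" "grow_step V E c D \<epsilon> (R ! i) (R ! Suc i)"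
    and "U \<in> comps V (sF (R ! i))"
    unfolding active_def by auto
  then show thesis
    using that[of "st (R ! i)"] time_nonneg idx_grow_start[OF i] unfolding tight_at_def by simp
qed

text \<open>Before \<open>t0\<close> the vertex \<open>a\<close> is active because its partner lies outside \<open>U\<close>; from
  \<open>t0\<close> on it shares the component of \<open>s1\<close>, which stays active until \<open>s1\<close> meets \<open>s2\<close>.\<close>
lemma act_conn_across_comp:
  assumes U0: "U \<in> comps V (tight_at t0)" and t0: "0 \<le> t0"
    and d: "{a, b} \<in> D" and "a \<in> U" "b \<notin> U"
    and "s1 \<in> U" "s2 \<in> V" "s2 \<notin> U" and s12: "act_conn V D R s1 s2"
  shows "act_conn V D R a s1"
proof -
  have aV: "a \<in> V" using comps_subset[OF U0] \<open>a \<in> U\<close> by blast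
  obtain t2 where t2: "0 \<le> t2" "s1 \<in> V" "conn (tight_at t2) s1 s2"
    "active_until s1 t2" "active_until s2 t2"
    using s12 by (rule act_connE)
  have "t0 \<le> t2"
  proof (rule ccontr)
    assume "\<not> t0 \<le> t2"
    then have "conn (tight_at t0) s1 s2" using conn_tight_at_mono[OF t2(1) _ t2(3)] by simp
    then show False using comp_closed[OF U0 \<open>s1 \<in> U\<close> \<open>s2 \<in> V\<close>] \<open>s2 \<notin> U\<close> by simp
  qed
  have a_s1: "conn (tight_at t0) a s1" using comp_conn[OF U0 \<open>a \<in> U\<close> \<open>s1 \<in> U\<close>] .
  have "active_until a t0"
  proof (rule active_until_while_apart[OF aV d])
    fix s assume "0 \<le> s" "s < t0"
    show "\<not> conn (tight_at s) a b"
    proof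
      assume "conn (tight_at s) a b"
      then have "conn (tight_at t0) a b"
        using conn_tight_at_mono[OF \<open>0 \<le> s\<close> less_imp_le[OF \<open>s < t0\<close>]] by simp
      then show False
        using comp_closed[OF U0 \<open>a \<in> U\<close>] demand_subset[OF d] \<open>b \<notin> U\<close> by simp
    qed
  qed
  then have "active_until a t2" using active_until_extend[OF aV a_s1 t0 \<open>t0 \<le> t2\<close> _ t2(4)] by simp
  moreover have "conn (tight_at t2) a s1" using conn_tight_at_mono[OF t0 \<open>t0 \<le> t2\<close> a_s1] .
  ultimately show ?thesis using act_connI[OF t2(1) aV t2(2)] t2(4) by simp
qed

end

section \<open>Charging the cost of a subforest of the optimum to the duals\<close>

definition crossings :: "'v set set \<Rightarrow> 'v set \<Rightarrow> nat" where
  "crossings X U = card {e \<in> X. in_delta U e}"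

lemma sum_load_eq:
  assumes "finite V" "finite X"
  shows "(\<Sum>e\<in>X. load V y e) = (\<Sum>U\<in>Pow V. y U * real (crossings X U))"
proof -
  have "load V y e = (\<Sum>U\<in>Pow V. if in_delta U e then y U else 0)" for e
  proof -
    have "{S. S \<subseteq> V \<and> in_delta S e} = {U \<in> Pow V. in_delta U e}" by auto
    then show ?thesis
      unfolding load_def using sum.inter_filter[of "Pow V" y "\<lambda>U. in_delta U e"] assms(1) by simp
  qed
  then have "(\<Sum>e\<in>X. load V y e) = (\<Sum>e\<in>X. \<Sum>U\<in>Pow V. if in_delta U e then y U else 0)"
    by simp
  also have "\<dots> = (\<Sum>U\<in>Pow V. \<Sum>e\<in>X. if in_delta U e then y U else 0)"
    by (rule sum.swap)
  also have "\<dots> = (\<Sum>U\<in>Pow V. y U * real (crossings X U))"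
    unfolding crossings_def using assms(2) by (simp add: sum.inter_filter[symmetric] mult.commute)
  finally show ?thesis .
qed

lemma sum_val_eq:
  assumes "finite V" "finite Dsat"
  shows "(\<Sum>d\<in>Dsat. val V D y \<phi> d) = sum y {U \<in> Usep V D y. \<phi> U \<in> Dsat}"
proof -
  have "{U \<in> Usep V D y. \<phi> U \<in> Dsat} \<subseteq> Pow V" by (auto simp: Usep_def)
  then have "finite {U \<in> Usep V D y. \<phi> U \<in> Dsat}" using assms(1) by (simp add: finite_subset)
  then have "(\<Sum>d\<in>Dsat. sum y {U \<in> {U \<in> Usep V D y. \<phi> U \<in> Dsat}. \<phi> U = d})
      = sum y {U \<in> Usep V D y. \<phi> U \<in> Dsat}"
    using assms(2) by (rule sum.group) auto
  moreover have "{U \<in> {U \<in> Usep V D y. \<phi> U \<in> Dsat}. \<phi> U = d} = {U \<in> Usep V D y. \<phi> U = d}"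
    if "d \<in> Dsat" for d using that by auto
  ultimately show ?thesis unfolding val_def by simp
qed

lemma Usep_subset_Pow: "Usep V D y \<subseteq> Pow V"
  by (auto simp: Usep_def)

lemma sum_subset_Pow:
  assumes "finite V" "A \<subseteq> Pow V"
  shows "sum y A = (\<Sum>U\<in>Pow V. if U \<in> A then y U else 0)"
  using sum.inter_restrict[of "Pow V" y A] assms by (simp add: Int_absorb1)

text \<open>The charging scheme for a single set \<open>U\<close> with \<open>n\<^sub>X\<close> edges of the subforest and
  \<open>n\<^sub>O\<close> edges of the optimum crossing it: a separating \<open>U\<close> is crossed by the optimum, and
  when it is crossed exactly once, a crossing of the subforest is paid by the value of a
  satisfied demand pair.\<close>
lemma charge_dual:
  fixes yU :: real and nX nO :: nat
  assumes "0 \<le> yU" "nX \<le> nO" and "sep \<Longrightarrow> 1 \<le> nO"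
    and "sep \<Longrightarrow> nO = 1 \<Longrightarrow> 1 \<le> nX \<Longrightarrow> sat"
  shows "yU * nX \<le> (if sep \<and> sat then yU else 0) + 2 * (yU * nO) - 2 * (if sep then yU else 0)"
proof (cases "sep \<and> nO \<noteq> 1")
  case True
  then have "real nX \<le> 2 * real nO - 2" using assms(2,3) by simp
  then have "yU * nX \<le> yU * (2 * real nO - 2)" using assms(1) by (rule mult_left_mono)
  then show ?thesis using True assms(1) by (auto simp: algebra_simps)
next
  case False
  show ?thesis
  proof (cases "sep")
    case True
    then have "nO = 1" using False by simp
    then have "nX = 0 \<or> nX = 1" using assms(2) by auto
    then show ?thesis using True \<open>nO = 1\<close> assms by auto
  next
    case False
    have "yU * nX \<le> yU * nO" using assms(1,2) by (simp add: mult_left_mono)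
    moreover have "0 \<le> yU * nO" using assms(1) by simp
    ultimately show ?thesis using False by simp
  qed
qed

lemma cost_le_val_plus_excess:
  fixes y :: "'v set \<Rightarrow> real"
  assumes "finite V" "X \<subseteq> OPT" "finite OPT" "finite Dsat"
    and load: "\<And>e. e \<in> OPT \<Longrightarrow> load V y e \<le> c e" and y: "\<And>U. 0 \<le> y U"
    and crossed: "\<And>U. U \<in> Usep V D y \<Longrightarrow> 1 \<le> crossings OPT U"
    and sat: "\<And>U. U \<in> Usep V D y \<Longrightarrow> crossings OPT U = 1 \<Longrightarrow> 1 \<le> crossings X U \<Longrightarrow> \<phi> U \<in> Dsat"
  shows "cost c X \<le> (\<Sum>d\<in>Dsat. val V D y \<phi> d) + 2 * excess V D c y OPT"
proof -
  define slack where "slack e = c e - load V y e" for e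
  have finX: "finite X" using assms(2,3) by (rule finite_subset)
  have cost_eq: "cost c F = (\<Sum>U\<in>Pow V. y U * real (crossings F U)) + sum slack F"
    if "finite F" for F
    unfolding cost_def slack_def using sum_load_eq[OF assms(1) that] by (simp add: sum_subtractf)
  have slack: "sum slack X \<le> sum slack OPT" "0 \<le> sum slack OPT"
    using load assms(2,3) unfolding slack_def by (auto intro: sum_mono2 sum_nonneg)
  have sat_subset: "{U \<in> Usep V D y. \<phi> U \<in> Dsat} \<subseteq> Pow V"
    using Usep_subset_Pow by blast
  have "crossings X U \<le> crossings OPT U" for U
    unfolding crossings_def using assms(2,3) by (intro card_mono) auto
  then have "(\<Sum>U\<in>Pow V. y U * real (crossings X U))
    \<le> (\<Sum>U\<in>Pow V. (if U \<in> Usep V D y \<and> \<phi> U \<in> Dsat then y U else 0)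
        + 2 * (y U * real (crossings OPT U)) - 2 * (if U \<in> Usep V D y then y U else 0))"
    using y crossed sat by (intro sum_mono charge_dual) auto
  also have "\<dots> = (\<Sum>d\<in>Dsat. val V D y \<phi> d) + 2 * (\<Sum>U\<in>Pow V. y U * real (crossings OPT U))
      - 2 * (\<Sum>U\<in>Usep V D y. y U)"
    unfolding sum_val_eq[OF assms(1,4)] sum_subset_Pow[OF assms(1) Usep_subset_Pow]
      sum_subset_Pow[OF assms(1) sat_subset]
    by (simp add: sum.distrib sum_subtractf sum_distrib_left)
  finally show ?thesis
    unfolding excess_def cost_eq[OF finX] cost_eq[OF assms(3)] using slack by simp
qed

section \<open>The canonical collection\<close>

lemma equiv_rtrancl_merge_rel: "equiv UNIV ((merge_rel V D y OPT)\<^sup>*)"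
proof -
  have "sym (merge_rel V D y OPT)" unfolding merge_rel_def sym_def by blast
  then show ?thesis by (simp add: equiv_def refl_rtrancl sym_rtrancl trans_rtrancl)
qed

lemma forest_subset_comps:
  assumes "Fo \<in> forests V D y OPT" "T \<in> Fo"
  shows "T \<in> comps V OPT"
proof -
  obtain T1 where "(T1, T) \<in> (merge_rel V D y OPT)\<^sup>*" "T1 \<in> comps V OPT"
    using assms unfolding forests_def quotient_def by blast
  then show ?thesis by (induction rule: rtrancl_induct) (auto simp: merge_rel_def)
qed

lemma forests_eq:
  assumes "Fo \<in> forests V D y OPT" "Fo' \<in> forests V D y OPT" "T \<in> Fo" "T \<in> Fo'"
  shows "Fo = Fo'"
proof -
  have "Fo \<in> UNIV // (merge_rel V D y OPT)\<^sup>*" "Fo' \<in> UNIV // (merge_rel V D y OPT)\<^sup>*"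
    using assms(1,2) unfolding forests_def quotient_def by blast+
  from quotient_disj[OF equiv_rtrancl_merge_rel this] show ?thesis using assms(3,4) by blast
qed

lemma canonE:
  assumes "(S, T) \<in> canon V D R OPT r"
  obtains Fo where "Fo \<in> forests V D (yfin R) OPT" "T \<in> Fo"
    "S = {v \<in> T. act_conn V D R v (r Fo)}" "S \<noteq> {}"
  using assms unfolding canon_def by blast

locale canonical_setting = moat_run_setting +
  fixes OPT :: "'a set set" and \<phi> :: "'a set \<Rightarrow> 'a set" and r :: "'a set set \<Rightarrow> 'a"
  assumes opt: "min_opt V E c D OPT"
    and phi: "\<forall>U\<in>Usep V D (yfin R). \<phi> U \<in> D \<and> separates U (\<phi> U)"
begin

lemma canon_in_tree:
  assumes "(S, T) \<in> canon V D R OPT r"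
  shows "T \<in> comps V OPT" "S \<subseteq> T"
proof -
  obtain Fo where "Fo \<in> forests V D (yfin R) OPT" "T \<in> Fo" "S = {v \<in> T. act_conn V D R v (r Fo)}"
    using assms by (rule canonE)
  then show "T \<in> comps V OPT" "S \<subseteq> T" using forest_subset_comps by auto
qed

lemma canon_eq_if_same_tree:
  assumes "(S, T) \<in> canon V D R OPT r" "(S', T) \<in> canon V D R OPT r"
  shows "S = S'"
proof -
  obtain Fo where "Fo \<in> forests V D (yfin R) OPT" "T \<in> Fo" "S = {v \<in> T. act_conn V D R v (r Fo)}"
    using assms(1) by (rule canonE)
  moreover obtain Fo' where "Fo' \<in> forests V D (yfin R) OPT" "T \<in> Fo'"
    "S' = {v \<in> T. act_conn V D R v (r Fo')}"
    using assms(2) by (rule canonE)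
  ultimately show ?thesis using forests_eq[of Fo V D "yfin R" OPT Fo' T] by simp
qed

lemma finite_canon: "finite (canon V D R OPT r)"
proof (rule finite_subset)
  show "canon V D R OPT r \<subseteq> Pow V \<times> Pow V"
  proof
    fix p assume "p \<in> canon V D R OPT r"
    then have "snd p \<in> comps V OPT" "fst p \<subseteq> snd p" using canon_in_tree[of "fst p" "snd p"] by simp_all
    then show "p \<in> Pow V \<times> Pow V" using comps_subset[of "snd p" V OPT] by (auto simp: mem_Times_iff)
  qed
  show "finite (Pow V \<times> Pow V)" using inst by (simp add: sf_instance_def)
qed

lemma canon_subtree_minimal:
  assumes "(S, T) \<in> canon V D R OPT r"
  shows "minimal_connector {e \<in> OPT. e \<subseteq> T} (min_subtree OPT T S) S"
  using min_subtree_minimal[OF inst opt] canon_in_tree[OF assms] by blast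

lemma canon_subtree_subset:
  assumes "(S, T) \<in> canon V D R OPT r"
  shows "min_subtree OPT T S \<subseteq> {e \<in> OPT. e \<subseteq> T}"
  using canon_subtree_minimal[OF assms] unfolding minimal_connector_def by blast

lemma canon_subtrees_disjoint:
  assumes "(S, T) \<in> canon V D R OPT r" "(S', T') \<in> canon V D R OPT r" "(S, T) \<noteq> (S', T')"
  shows "min_subtree OPT T S \<inter> min_subtree OPT T' S' = {}"
proof (rule ccontr)
  assume "min_subtree OPT T S \<inter> min_subtree OPT T' S' \<noteq> {}"
  then obtain e where "e \<in> OPT" "e \<subseteq> T" "e \<subseteq> T'"
    using canon_subtree_subset[OF assms(1)] canon_subtree_subset[OF assms(2)] by blast
  moreover obtain v where "v \<in> e"
    using min_opt_edge(2)[OF inst opt \<open>e \<in> OPT\<close>] by (cases "e = {}") auto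
  ultimately have "T = T'"
    using comps_eq[OF canon_in_tree(1)[OF assms(1)] canon_in_tree(1)[OF assms(2)]] by blast
  then show False using canon_eq_if_same_tree[of S T S'] assms by simp
qed

definition canon_forest :: "'a set set" where
  "canon_forest = (\<Union>(S, T)\<in>canon V D R OPT r. min_subtree OPT T S)"

lemma canon_forest_subset: "canon_forest \<subseteq> OPT"
  unfolding canon_forest_def using canon_subtree_subset by blast

lemma cost_canon_forest:
  "(\<Sum>(S, T)\<in>canon V D R OPT r. cost c (min_subtree OPT T S)) = cost c canon_forest"
proof -
  have "\<forall>p\<in>canon V D R OPT r. finite (case p of (S, T) \<Rightarrow> min_subtree OPT T S)"
    using canon_subtree_subset min_opt_finite[OF inst opt] by (auto intro: finite_subset)
  moreover have "\<forall>p\<in>canon V D R OPT r. \<forall>p'\<in>canon V D R OPT r. p \<noteq> p' \<longrightarrow>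
      (case p of (S, T) \<Rightarrow> min_subtree OPT T S) \<inter> (case p' of (S, T) \<Rightarrow> min_subtree OPT T S) = {}"
    using canon_subtrees_disjoint[of "fst p" "snd p" "fst p'" "snd p'" for p p'] by (simp add: split_def)
  ultimately have "sum c canon_forest
      = (\<Sum>p\<in>canon V D R OPT r. sum c (case p of (S, T) \<Rightarrow> min_subtree OPT T S))"
    unfolding canon_forest_def by (rule sum.UNION_disjoint[OF finite_canon])
  then show ?thesis unfolding cost_def by (simp add: split_def)
qed

lemma opt_edge_two: "e \<in> OPT \<Longrightarrow> card e = 2"
  using min_opt_edge(2)[OF inst opt] .

lemma demand_conn_opt:
  assumes "{a, b} \<in> D"
  shows "conn OPT a b"
proof -
  have "feasible V D OPT" using opt by (simp add: min_opt_def)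
  then obtain C where "C \<in> comps V OPT" "{a, b} \<subseteq> C"
    using assms unfolding feasible_def by blast
  then show ?thesis using comp_conn[of C V OPT a b] by simp
qed

lemma opt_crosses_Usep:
  assumes "U \<in> Usep V D (yfin R)"
  shows "1 \<le> crossings OPT U"
proof -
  obtain d where "d \<in> D" "separates U d" using assms unfolding Usep_def by blast
  moreover have "card d = 2" using inst \<open>d \<in> D\<close> unfolding sf_instance_def by blast
  ultimately obtain a b where ab: "d = {a, b}" "a \<in> U" "b \<notin> U"
    using separatesE by metis
  have "conn OPT a b" using demand_conn_opt \<open>d \<in> D\<close> ab(1) by simp
  then obtain x x' where "{x, x'} \<in> OPT" "x \<in> U" "x' \<notin> U"
    using conn_leaves[OF _ ab(2,3)] by blast
  then have "{x, x'} \<in> {e \<in> OPT. in_delta U e}" using in_delta_doubleton by simp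
  moreover have "finite {e \<in> OPT. in_delta U e}" using min_opt_finite[OF inst opt] by simp
  ultimately have "0 < card {e \<in> OPT. in_delta U e}" using card_gt_0_iff by blast
  then show ?thesis unfolding crossings_def by simp
qed

text \<open>A demand pair separated by \<open>U\<close> is connected in the optimum through an edge crossing \<open>U\<close>.\<close>
lemma demand_in_tree_of_unique_crossing:
  assumes unique: "{e' \<in> OPT. in_delta U e'} = {e}" and "e \<subseteq> T" and T: "T \<in> comps V OPT"
    and d: "{a, b} \<in> D" "a \<in> U" "b \<notin> U"
  shows "a \<in> T" "b \<in> T"
proof -
  obtain x x' where x: "{x, x'} \<in> OPT" "x \<in> U" "x' \<notin> U" "conn OPT a x"
    using conn_leaves[OF demand_conn_opt[OF d(1)] d(2,3)] by blast
  then have "{x, x'} \<in> {e' \<in> OPT. in_delta U e'}" using in_delta_doubleton by simp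
  then have "x \<in> T" using unique \<open>e \<subseteq> T\<close> by auto
  have "a \<in> V" "b \<in> V" using demand_subset[OF d(1)] by auto
  show "a \<in> T" using comp_closed[OF T \<open>x \<in> T\<close> \<open>a \<in> V\<close> conn_sym[OF x(4)]] .
  show "b \<in> T" using comp_closed[OF T \<open>a \<in> T\<close> \<open>b \<in> V\<close> demand_conn_opt[OF d(1)]] .
qed

lemma canon_split_by_unique_crossing:
  assumes "(S, T) \<in> canon V D R OPT r" and e: "e \<in> min_subtree OPT T S"
    and unique: "{e' \<in> OPT. in_delta U e'} = {e}"
  shows "\<exists>s\<in>S. \<exists>s'\<in>S. s \<in> U \<and> s' \<notin> U"
proof -
  have "e \<in> OPT" "in_delta U e" using unique by auto
  then have "card e = 2" "separates U e" using opt_edge_two in_delta_separates by auto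
  then obtain p q where pq: "e = {p, q}" "p \<in> U" "q \<notin> U" by (rule separatesE)
  have closed: "y \<in> U" if "{x, y} \<in> min_subtree OPT T S - {{p, q}}" "x \<in> U" for x y
  proof (rule ccontr)
    assume "y \<notin> U"
    moreover have "{x, y} \<in> OPT" using that(1) canon_subtree_subset[OF assms(1)] by blast
    ultimately have "{x, y} \<in> {e' \<in> OPT. in_delta U e'}" using that(2) in_delta_doubleton by simp
    then show False using unique that(1) pq(1) by simp
  qed
  show ?thesis
    by (rule minimal_connector_splits[OF canon_subtree_minimal[OF assms(1)] e[unfolded pq] pq(2,3)])
      (fact closed)
qed

lemma satisfied_if_unique_crossing:
  assumes U: "U \<in> Usep V D (yfin R)" and "crossings OPT U = 1" "1 \<le> crossings canon_forest U"
  shows "\<exists>S\<in>fst ` canon V D R OPT r. \<phi> U \<subseteq> S"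
proof -
  have "{e \<in> canon_forest. in_delta U e} \<noteq> {}"
    using assms(3) unfolding crossings_def by (metis card.empty not_one_le_zero)
  then obtain e where "e \<in> canon_forest" "in_delta U e" by blast
  moreover obtain e0 where "{e' \<in> OPT. in_delta U e'} = {e0}"
    using assms(2) unfolding crossings_def by (rule card_1_singletonE)
  ultimately have unique: "{e' \<in> OPT. in_delta U e'} = {e}" using canon_forest_subset by blast
  obtain S T where ST: "(S, T) \<in> canon V D R OPT r" "e \<in> min_subtree OPT T S"
    using \<open>e \<in> canon_forest\<close> unfolding canon_forest_def by blast
  obtain Fo where Fo: "S = {v \<in> T. act_conn V D R v (r Fo)}" using ST(1) by (rule canonE)
  obtain s s' where s: "s \<in> S" "s' \<in> S" "s \<in> U" "s' \<notin> U"
    using canon_split_by_unique_crossing[OF ST unique] by blast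
  have "\<phi> U \<in> D" "separates U (\<phi> U)" using phi U by auto
  moreover have "card (\<phi> U) = 2" using inst \<open>\<phi> U \<in> D\<close> unfolding sf_instance_def by blast
  ultimately obtain a b where ab: "\<phi> U = {a, b}" "a \<in> U" "b \<notin> U" and d: "{a, b} \<in> D"
    using separatesE by metis
  have "s' \<in> V" using s(2) canon_in_tree[OF ST(1)] comps_subset by blast
  have "yfin R U \<noteq> 0" using U unfolding Usep_def by blast
  then obtain t0 where t0: "0 \<le> t0" "U \<in> comps V (tight_at t0)" by (rule positive_dual_comp)
  have root: "act_conn V D R s (r Fo)" "act_conn V D R s' (r Fo)" using s(1,2) Fo by auto
  then have "act_conn V D R s s'" using act_conn_trans[OF root(1) act_conn_sym[OF root(2)]] by simp
  then have "act_conn V D R a s"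
    using act_conn_across_comp[OF t0(2,1) d ab(2,3) s(3) \<open>s' \<in> V\<close> s(4)] by simp
  then have a_root: "act_conn V D R a (r Fo)" using act_conn_trans[OF _ root(1)] by simp
  have b_root: "act_conn V D R b (r Fo)"
    using act_conn_trans[OF act_conn_sym[OF demand_act_conn[OF d]] a_root] .
  have "e \<subseteq> T" using canon_subtree_subset[OF ST(1)] ST(2) by blast
  then have "a \<in> T" "b \<in> T"
    using demand_in_tree_of_unique_crossing[OF unique _ canon_in_tree(1)[OF ST(1)] d ab(2,3)] by simp_all
  then have "\<phi> U \<subseteq> S" using Fo ab(1) a_root b_root by simp
  then show ?thesis using ST(1) by force
qed

end

theorem lemma6p4:
  fixes V :: "'v set" and E D OPT :: "'v set set" and c :: "'v set \<Rightarrow> real"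
    and \<epsilon> :: real and R :: "'v state list"
    and \<phi> :: "'v set \<Rightarrow> 'v set" and r :: "'v set set \<Rightarrow> 'v"
  assumes inst: "sf_instance V E c D"
    and opt: "min_opt V E c D OPT"
    and eps: "\<epsilon> \<ge> 0"
    and run: "moat_run V E c D \<epsilon> R"
    and phi: "\<forall>U\<in>Usep V D (yfin R). \<phi> U \<in> D \<and> separates U (\<phi> U)"
    and root: "\<forall>Fo\<in>forests V D (yfin R) OPT. r Fo \<in> \<Union>Fo \<and>
                 (\<forall>v\<in>\<Union>Fo. tau V D R v \<le> tau V D R (r Fo))"
  shows "(\<Sum>(S, T)\<in>canon V D R OPT r. cost c (min_subtree OPT T S))
           \<le> val_coll V D (yfin R) \<phi> (fst ` canon V D R OPT r)
              + 2 * excess V D c (yfin R) OPT"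
proof -
  interpret canonical_setting V E c D \<epsilon> R OPT \<phi> r
    using inst run opt phi by unfold_locales
  define Dsat where "Dsat = {d \<in> D. \<exists>S\<in>fst ` canon V D R OPT r. d \<subseteq> S}"
  have "finite Dsat"
    using inst finite_subset[of Dsat "Pow V"] unfolding Dsat_def sf_instance_def by auto
  have "cost c canon_forest \<le> (\<Sum>d\<in>Dsat. val V D (yfin R) \<phi> d) + 2 * excess V D c (yfin R) OPT"
  proof (rule cost_le_val_plus_excess)
    show "load V (yfin R) e \<le> c e" if "e \<in> OPT" for e
      using yfin_load_le_cost opt that by (auto simp: min_opt_def)
    show "\<phi> U \<in> Dsat" if "U \<in> Usep V D (yfin R)" "crossings OPT U = 1" "1 \<le> crossings canon_forest U" for U
      using satisfied_if_unique_crossing[OF that] phi that(1) unfolding Dsat_def by blast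
  qed (use inst canon_forest_subset min_opt_finite[OF inst opt] \<open>finite Dsat\<close> yfin_nonneg
        opt_crosses_Usep in \<open>auto simp: sf_instance_def\<close>)
  then show ?thesis unfolding cost_canon_forest val_coll_def Dsat_def .
qed

end
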